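(* Consider the simplified FaRMv2 protocol described in the context. (1) In any invocation of GET\_TS, let $[L,U]$ be the interval returned by its call to TIME, let $\mathcal{R}(time)$ be the global time at which that call to TIME occurs, and let $\mathcal{R}(ret)$ be the global time at which GET\_TS returns. Then $L \le \mathcal{R}(time) \le U \le \mathcal{R}(ret)$. (2) Let $T$ be a committed read-write transaction with write timestamp $wts$. For every object $W$ in the write set of $T$, if $\mathcal{R}(\mathsf{lock}(W))$ denotes the global time at which the coordinator's lock of $W$ completes successfully, then $\mathcal{R}(\mathsf{lock}(W)) \le wts$.
   Context: Global time means the time at a distinguished clock master. Each machine has a local clock whose rate differs from that of global time by a relative factor of at most a known drift bound $\epsilon$. The function TIME() returns an interval $[L,U]$ such that the global time at the moment of the call lies in $[L,U]$. The function GET\_TS is: $[L,U] \gets \mathrm{TIME}()$; sleep for $(U-L)(1+\epsilon)$ units of local time; return $U$. The data consists of objects, each having a lock bit and a set of versions, each version tagged with a timestamp (the write timestamp of the transaction that wrote it). ReadAtTs$(R,ts)$: if $R$ is locked return NULL; otherwise return the version of $R$ with the highest timestamp $\le ts$, or NULL if none is available. LockAtTs$(R,ts)$: if $R$ is locked or $R$ has timestamp $\ge ts$ return NULL; otherwise lock $R$. A transaction with read set RSet and write set WSet executes ExecuteAndCommit(RSet, WSet): $rts \gets$ GET\_TS; for each $R\in$ RSet, if ReadAtTs$(R,rts)$ returns NULL then abort; if WSet is empty, commit (read-only transaction); otherwise for each $W\in$ WSet, if LockAtTs$(W,rts)$ returns NULL then abort; then $wts \gets$ GET\_TS (performed while holding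 the locks); then for each $R \in$ RSet $\setminus$ WSet, if $R$ is locked or $R$ has timestamp $> rts$, abort (validation failure); then install for each object in WSet a new version with timestamp $wts$, unlock all objects, and commit. Here $rts$ is the transaction's read timestamp and $wts$ its write timestamp. *)

theory Defs
  imports Complex_Main
begin

text \<open>Global time is modelled by real numbers.  A local clock is a function
  mapping global time to the local clock reading.\<close>

definition clock_drift_bounded :: "real \<Rightarrow> (real \<Rightarrow> real) \<Rightarrow> bool" where
  "clock_drift_bounded eps clk \<longleftrightarrow>
     (\<forall>t1 t2. t1 \<le> t2 \<longrightarrow> \<bar>(clk t2 - clk t1) - (t2 - t1)\<bar> \<le> eps * (t2 - t1))"

text \<open>An invocation of GET_TS, recorded by the global times of its steps:
  the moment of the TIME call, the interval [L,U] returned by TIME,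
  start and end of the sleep, and the return of GET_TS.\<close>

record get_ts_run =
  gt_time        :: real
  gt_L           :: real
  gt_U           :: real
  gt_sleep_start :: real
  gt_sleep_end   :: real
  gt_ret         :: real

definition get_ts_exec :: "real \<Rightarrow> (real \<Rightarrow> real) \<Rightarrow> get_ts_run \<Rightarrow> bool" where
  "get_ts_exec eps clk g \<longleftrightarrow>
     gt_L g \<le> gt_time g \<and> gt_time g \<le> gt_U g \<and>
     gt_time g \<le> gt_sleep_start g \<and> gt_sleep_start g \<le> gt_sleep_end g \<and>
     clk (gt_sleep_end g) - clk (gt_sleep_start g) = (gt_U g - gt_L g) * (1 + eps) \<and>
     gt_sleep_end g \<le> gt_ret g"

definition get_ts_result :: "get_ts_run \<Rightarrow> real" where
  "get_ts_result g = gt_U g"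

text \<open>The coordinator-side trace of an execution of ExecuteAndCommit for a
  transaction, recorded by global times: the GET_TS run producing rts,
  completion times of the reads, completion times of the locks, the GET_TS
  run producing wts, the validation and the commit.\<close>

record 'obj txn_run =
  tx_RSet      :: "'obj set"
  tx_WSet      :: "'obj set"
  tx_rts_run   :: get_ts_run
  tx_read_time :: "'obj \<Rightarrow> real"
  tx_lock_time :: "'obj \<Rightarrow> real"
  tx_wts_run   :: get_ts_run
  tx_validate_time :: real
  tx_commit_time   :: real

definition tx_rts :: "'obj txn_run \<Rightarrow> real" where
  "tx_rts T = get_ts_result (tx_rts_run T)"

definition tx_wts :: "'obj txn_run \<Rightarrow> real" where
  "tx_wts T = get_ts_result (tx_wts_run T)"

text \<open>A committed read-write transaction: the write set is nonempty, and the
  coordinator's steps happen in program order of ExecuteAndCommit: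
  rts := GET_TS; reads; locks (each completing successfully);
  wts := GET_TS while holding the locks; validation; install and commit.\<close>

definition committed_rw_exec :: "real \<Rightarrow> (real \<Rightarrow> real) \<Rightarrow> 'obj txn_run \<Rightarrow> bool" where
  "committed_rw_exec eps clk T \<longleftrightarrow>
     finite (tx_RSet T) \<and> finite (tx_WSet T) \<and> tx_WSet T \<noteq> {} \<and>
     get_ts_exec eps clk (tx_rts_run T) \<and>
     (\<forall>R\<in>tx_RSet T. gt_ret (tx_rts_run T) \<le> tx_read_time T R) \<and>
     (\<forall>W\<in>tx_WSet T. gt_ret (tx_rts_run T) \<le> tx_lock_time T W) \<and>
     (\<forall>R\<in>tx_RSet T. \<forall>W\<in>tx_WSet T. tx_read_time T R \<le> tx_lock_time T W) \<and>
     (\<forall>W\<in>tx_WSet T. tx_lock_time T W \<le> gt_time (tx_wts_run T)) \<and>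
     get_ts_exec eps clk (tx_wts_run T) \<and>
     gt_ret (tx_wts_run T) \<le> tx_validate_time T \<and>
     tx_validate_time T \<le> tx_commit_time T"

end

theory Submission
  imports Defs
begin

text \<open>A local clock running at most 1 + eps times as fast as global time
  needs at least U - L global time units to advance by (U - L)(1 + eps).
  So the sleep of GET_TS, which starts after the TIME call at global time at least L,
  ends at global time at least U.  A lock completes before the TIME call of the
  write timestamp, and that call happens no later than the returned upper bound wts.\<close>

lemma clock_drift_bounded_elapsed_le:
  assumes "clock_drift_bounded eps clk" "t1 \<le> t2"
  shows "clk t2 - clk t1 \<le> (1 + eps) * (t2 - t1)"
  using assms unfolding clock_drift_bounded_def by (force simp: algebra_simps)

lemma get_ts_exec_uncertainty_le_sleep:
  assumes "0 < 1 + eps" "clock_drift_bounded eps clk" "get_ts_exec eps clk g"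
  shows "gt_U g - gt_L g \<le> gt_sleep_end g - gt_sleep_start g"
proof -
  have sleep: "gt_sleep_start g \<le> gt_sleep_end g"
    using assms(3) unfolding get_ts_exec_def by simp
  have "(1 + eps) * (gt_U g - gt_L g) = clk (gt_sleep_end g) - clk (gt_sleep_start g)"
    using assms(3) unfolding get_ts_exec_def by (simp add: mult.commute)
  also have "\<dots> \<le> (1 + eps) * (gt_sleep_end g - gt_sleep_start g)"
    using assms(2) sleep by (rule clock_drift_bounded_elapsed_le)
  finally show ?thesis
    using assms(1) by (rule mult_left_le_imp_le)
qed

lemma get_ts_exec_U_le_ret:
  assumes "0 < 1 + eps" "clock_drift_bounded eps clk" "get_ts_exec eps clk g"
  shows "gt_U g \<le> gt_ret g"
  using get_ts_exec_uncertainty_le_sleep[OF assms] assms(3)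
  unfolding get_ts_exec_def by linarith

lemma get_ts_exec_time_le_result:
  assumes "get_ts_exec eps clk g"
  shows "gt_time g \<le> get_ts_result g"
  using assms unfolding get_ts_exec_def get_ts_result_def by simp

lemma committed_rw_exec_lock_le_wts:
  assumes "committed_rw_exec eps clk T" "W \<in> tx_WSet T"
  shows "tx_lock_time T W \<le> tx_wts T"
proof -
  have "tx_lock_time T W \<le> gt_time (tx_wts_run T)"
    using assms unfolding committed_rw_exec_def by blast
  also have "\<dots> \<le> tx_wts T"
    using assms(1) unfolding committed_rw_exec_def tx_wts_def
    by (blast intro: get_ts_exec_time_le_result)
  finally show ?thesis .
qed

theorem lemma1:
  fixes eps :: real and clk :: "real \<Rightarrow> real"
  assumes "0 \<le> eps"
    and "clock_drift_bounded eps clk"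
  shows "(\<forall>g. get_ts_exec eps clk g \<longrightarrow>
            gt_L g \<le> gt_time g \<and> gt_time g \<le> gt_U g \<and> gt_U g \<le> gt_ret g)
       \<and> (\<forall>T :: 'obj txn_run. committed_rw_exec eps clk T \<longrightarrow>
            (\<forall>W\<in>tx_WSet T. tx_lock_time T W \<le> tx_wts T))"
proof (intro conjI allI impI ballI)
  fix g assume g: "get_ts_exec eps clk g"
  then show "gt_L g \<le> gt_time g" "gt_time g \<le> gt_U g"
    unfolding get_ts_exec_def by auto
  have "0 < 1 + eps"
    using assms(1) by simp
  then show "gt_U g \<le> gt_ret g"
    using assms(2) g by (rule get_ts_exec_U_le_ret)
next
  fix T :: "'obj txn_run" and W
  assume "committed_rw_exec eps clk T" "W \<in> tx_WSet T"
  then show "tx_lock_time T W \<le> tx_wts T"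
    by (rule committed_rw_exec_lock_le_wts)
qed

end
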